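(* Let $p>1$ be an integer and let $u^{(p)}$ be the infinite word over $\{L,S,M\}$ invariant under the substitution $\varphi_p$ defined by $\varphi_p(L)=L^pS$, $\varphi_p(S)=M$, $\varphi_p(M)=L^{p-1}S$. Then $u^{(p)}$ is $3$-balanced, and it is not $2$-balanced.
   Context: The unique fixed point of $\varphi_p$ is $u^{(p)}=\lim_{n\to\infty}\varphi_p^n(L)$. For a finite word $w$, $|w|$ is its length and $|w|_a$ the number of occurrences of the letter $a$. An infinite word $u$ over an alphabet $\mathcal A$ is $c$-balanced if for every letter $a\in\mathcal A$ and all pairs of factors $v,w$ of $u$ with $|v|=|w|$ one has $\left||v|_a-|w|_a\right|\le c$. *)

theory Defs
  imports Main
begin

datatype letter = L | S | M

fun phi :: "nat \<Rightarrow> letter \<Rightarrow> letter list" where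
  "phi p L = replicate p L @ [S]"
| "phi p S = [M]"
| "phi p M = replicate (p - 1) L @ [S]"

definition phi_word :: "nat \<Rightarrow> letter list \<Rightarrow> letter list" where
  "phi_word p w = concat (map (phi p) w)"

definition phi_iter :: "nat \<Rightarrow> nat \<Rightarrow> letter list" where
  "phi_iter p n = (phi_word p ^^ n) [L]"

text \<open>The fixed point u^(p) = lim phi_p^n(L), as an infinite word nat => letter:
  position i carries the letter that phi_p^n(L) eventually has at position i.\<close>
definition u :: "nat \<Rightarrow> nat \<Rightarrow> letter" where
  "u p i = (THE a. \<exists>N. \<forall>n\<ge>N. i < length (phi_iter p n) \<and> phi_iter p n ! i = a)"

definition factors :: "(nat \<Rightarrow> 'a) \<Rightarrow> 'a list set" where
  "factors w = {map w [i..<i + n] | i n. True}"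

definition balanced :: "nat \<Rightarrow> (nat \<Rightarrow> 'a) \<Rightarrow> bool" where
  "balanced c w \<longleftrightarrow> (\<forall>a v x. v \<in> factors w \<and> x \<in> factors w \<and> length v = length x \<longrightarrow>
      \<bar>int (count_list v a) - int (count_list x a)\<bar> \<le> int c)"

end

theory Submission
  imports Defs "HOL-Library.Sublist"
begin

text \<open>Since \<open>u p\<close> is a fixed point of \<open>phi p\<close>, every pair of windows of \<open>u p\<close> arises from a
  pair of parent windows by applying \<open>phi p\<close> and trimming less than one block at each end.
  Record for a pair of windows the differences \<open>d\<close>, \<open>s\<close>, \<open>m\<close> of their lengths, of their
  numbers of \<open>S\<close> and of their numbers of \<open>M\<close>: passing to the children maps \<open>(d, s, m)\<close> to
  \<open>((p + 1) d - p s - m + \<rho>, d - s, s)\<close> with \<open>|\<rho>| \<le> 2p\<close>. Any set of such states containing the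
  initial one and closed under this step while \<open>|d| \<le> E\<close>, and which forces \<open>|s|, |m|, |s + m| \<le> 3\<close>
  when \<open>d = 0\<close>, proves 3-balancedness by induction on the windows. For \<open>p \<ge> 7\<close> the bounds
  \<open>|s|, |m| \<le> 2\<close> (with a side condition at \<open>s = \<plusminus>2\<close>) are such a set; for \<open>2 \<le> p \<le> 6\<close> it is an
  explicit finite table, checked by evaluation.

  Failure of 2-balancedness is witnessed by two factors with the same length whose numbers
  of \<open>L\<close> differ by 3: for \<open>p \<ge> 3\<close> they are obtained by iterating \<open>phi p\<close> from \<open>L\<close>, for \<open>p = 2\<close>
  they are read off \<open>phi_iter 2 6\<close>.\<close>

section \<open>Blocks of the fixed point\<close>

lemma length_phi_pos: "0 < length (phi p a)"
  by (cases a) auto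

lemma length_phi_le: "1 \<le> p \<Longrightarrow> length (phi p a) \<le> p + 1"
  by (cases a) auto

lemma phi_word_Nil [simp]: "phi_word p [] = []"
  and phi_word_Cons [simp]: "phi_word p (a # w) = phi p a @ phi_word p w"
  and phi_word_append [simp]: "phi_word p (v @ w) = phi_word p v @ phi_word p w"
  by (simp_all add: phi_word_def)

lemma phi_word_replicate_L: "phi_word p (replicate n L) = concat (replicate n (replicate p L @ [S]))"
  by (induction n) auto

lemma length_phi_word_ge: "length w \<le> length (phi_word p w)"
proof (induction w)
  case (Cons a w)
  then show ?case using length_phi_pos[of p a] by (simp del: length_greater_0_conv)
qed simp

lemma prefix_phi_word: "prefix v w \<Longrightarrow> prefix (phi_word p v) (phi_word p w)"
  by (auto simp: prefix_def)

lemma phi_iter_0: "phi_iter p 0 = [L]"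
  and phi_iter_Suc: "phi_iter p (Suc n) = phi_word p (phi_iter p n)"
  by (simp_all add: phi_iter_def)

lemma prefix_phi_iter:
  assumes "1 \<le> p" and "n \<le> m"
  shows "prefix (phi_iter p n) (phi_iter p m)"
proof (rule prefix_order.lift_Suc_mono_le[OF _ \<open>n \<le> m\<close>])
  fix k
  show "prefix (phi_iter p k) (phi_iter p (Suc k))"
  proof (induction k)
    case 0
    then show ?case using \<open>1 \<le> p\<close> by (cases p) (auto simp: phi_iter_0 phi_iter_Suc)
  next
    case (Suc k)
    then show ?case by (simp only: phi_iter_Suc prefix_phi_word)
  qed
qed

lemma phi_iter_Cons: "1 \<le> p \<Longrightarrow> \<exists>w. phi_iter p n = L # w"
  using prefix_phi_iter[of p 0 n] by (auto simp: phi_iter_0 prefix_def)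

lemma length_phi_iter: "1 \<le> p \<Longrightarrow> n < length (phi_iter p n)"
proof (induction n)
  case (Suc n)
  then obtain w where "phi_iter p n = L # w" using phi_iter_Cons by blast
  then show ?case using Suc length_phi_word_ge[of w p] by (simp add: phi_iter_Suc)
qed (simp add: phi_iter_0)

lemma u_eq_phi_iter_nth:
  assumes "1 \<le> p" and "i < length (phi_iter p n)"
  shows "u p i = phi_iter p n ! i"
proof -
  have agree: "i < length (phi_iter p m) \<and> phi_iter p m ! i = phi_iter p n ! i" if "n \<le> m" for m
    using prefix_phi_iter[OF \<open>1 \<le> p\<close> that] assms(2) by (auto simp: prefix_def nth_append)
  show ?thesis
    unfolding u_def
  proof (rule the_equality)
    show "\<exists>N. \<forall>m\<ge>N. i < length (phi_iter p m) \<and> phi_iter p m ! i = phi_iter p n ! i"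
      using agree by blast
  next
    fix a
    assume "\<exists>N. \<forall>m\<ge>N. i < length (phi_iter p m) \<and> phi_iter p m ! i = a"
    then obtain N where "\<forall>m\<ge>N. phi_iter p m ! i = a" by blast
    then show "a = phi_iter p n ! i" using agree[of "max N n"] by simp
  qed
qed

lemma u_0: "1 \<le> p \<Longrightarrow> u p 0 = L"
  using u_eq_phi_iter_nth[of p 0 0] by (simp add: phi_iter_0)

lemma map_u_eq_take_phi_iter:
  "1 \<le> p \<Longrightarrow> m \<le> length (phi_iter p n) \<Longrightarrow> map (u p) [0..<m] = take m (phi_iter p n)"
  by (rule nth_equalityI) (simp_all add: u_eq_phi_iter_nth)

text \<open>The letters of \<open>u p\<close> at positions \<open>[block_start p k..<block_start p (Suc k)]\<close>
  form the image \<open>phi p (u p k)\<close> of its \<open>k\<close>-th letter.\<close>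
definition block_start :: "nat \<Rightarrow> nat \<Rightarrow> nat" where
  "block_start p k = length (phi_word p (map (u p) [0..<k]))"

lemma block_start_0 [simp]: "block_start p 0 = 0"
  and block_start_Suc: "block_start p (Suc k) = block_start p k + length (phi p (u p k))"
  by (simp_all add: block_start_def)

lemma map_u_block_start_0:
  assumes "1 \<le> p"
  shows "map (u p) [0..<block_start p k] = phi_word p (map (u p) [0..<k])"
proof -
  let ?w = "phi_iter p k"
  have k: "k \<le> length ?w" using length_phi_iter[OF assms, of k] by simp
  then have pre: "map (u p) [0..<k] = take k ?w" by (rule map_u_eq_take_phi_iter[OF assms])
  have "prefix (phi_word p (take k ?w)) (phi_iter p (Suc k))"
    unfolding phi_iter_Suc by (intro prefix_phi_word take_is_prefix)
  then obtain z where z: "phi_iter p (Suc k) = phi_word p (map (u p) [0..<k]) @ z"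
    by (auto simp: prefix_def pre)
  then have "map (u p) [0..<block_start p k] = take (block_start p k) (phi_iter p (Suc k))"
    by (intro map_u_eq_take_phi_iter[OF assms]) (simp add: block_start_def)
  then show ?thesis by (simp add: z block_start_def)
qed

lemma block_start_add:
  "block_start p (i + n) = block_start p i + length (phi_word p (map (u p) [i..<i + n]))"
  by (simp add: block_start_def upt_add_eq_append[of 0 i n])

lemma map_u_block_start:
  assumes "1 \<le> p"
  shows "map (u p) [block_start p i..<block_start p (i + n)] = phi_word p (map (u p) [i..<i + n])"
proof -
  have "map (u p) [0..<block_start p (i + n)] =
      map (u p) [0..<block_start p i] @ map (u p) [block_start p i..<block_start p (i + n)]"
    by (simp add: block_start_add upt_add_eq_append[of 0 "block_start p i"])
  moreover have "map (u p) [0..<block_start p (i + n)] =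
      phi_word p (map (u p) [0..<i]) @ phi_word p (map (u p) [i..<i + n])"
    by (simp add: map_u_block_start_0[OF assms] upt_add_eq_append[of 0 i n])
  ultimately show ?thesis by (simp add: map_u_block_start_0[OF assms])
qed

lemma u_block_start_add:
  assumes "1 \<le> p" and "r < length (phi p (u p k))"
  shows "u p (block_start p k + r) = phi p (u p k) ! r"
  using arg_cong[OF map_u_block_start[OF assms(1), of k 1], of "\<lambda>w. w ! r"] assms(2)
  by (simp add: block_start_Suc)

lemma block_start_less_Suc: "block_start p k < block_start p (Suc k)"
  using length_phi_pos[of p "u p k"] by (simp del: length_greater_0_conv add: block_start_Suc)

lemma block_start_mono: "k \<le> k' \<Longrightarrow> block_start p k \<le> block_start p k'"
  by (rule lift_Suc_mono_le[of "block_start p"]) (simp_all add: block_start_Suc)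

lemma le_block_start: "k \<le> block_start p k"
proof (induction k)
  case (Suc k)
  then show ?case using block_start_less_Suc[of p k] by simp
qed simp

lemma less_block_start:
  assumes "1 \<le> p" and "0 < k"
  shows "k < block_start p k"
proof -
  obtain k' where k: "k = Suc k'" using \<open>0 < k\<close> gr0_implies_Suc by blast
  have "Suc k' < block_start p (Suc k')"
  proof (induction k')
    case 0
    then show ?case using assms(1) by (simp add: block_start_Suc u_0)
  next
    case (Suc k')
    then show ?case using length_phi_pos[of p "u p (Suc k')"]
      by (simp del: length_greater_0_conv add: block_start_Suc)
  qed
  then show ?thesis by (simp add: k)
qed

definition block_pos :: "nat \<Rightarrow> nat \<Rightarrow> nat \<Rightarrow> nat \<Rightarrow> bool" where
  "block_pos p k r i \<longleftrightarrow> i = block_start p k + r \<and> r < length (phi p (u p k))"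

lemma block_decomp: "\<exists>k r. block_pos p k r i"
  unfolding block_pos_def
proof (induction i)
  case 0
  show ?case using length_phi_pos by (intro exI[of _ 0]) auto
next
  case (Suc i)
  then obtain k r where i: "i = block_start p k + r" and r: "r < length (phi p (u p k))"
    by blast
  show ?case
  proof (cases "Suc r < length (phi p (u p k))")
    case True
    then have "Suc i = block_start p k + Suc r" using i by simp
    then show ?thesis using True by blast
  next
    case False
    then have "Suc i = block_start p (Suc k) + 0" using i r by (simp add: block_start_Suc)
    then show ?thesis using length_phi_pos by blast
  qed
qed

lemma block_pos_mono:
  assumes "block_pos p k r i" and "block_pos p k' r' i'" and "i \<le> i'"
  shows "k \<le> k'"
proof (rule ccontr)
  assume "\<not> k \<le> k'"
  then have "block_start p (Suc k') \<le> block_start p k" by (intro block_start_mono) simp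
  then show False using assms by (simp add: block_pos_def block_start_Suc)
qed

lemma block_pos_le: "block_pos p k r i \<Longrightarrow> k \<le> i"
  using le_block_start[of k p] by (simp add: block_pos_def)

lemma block_pos_less: "1 \<le> p \<Longrightarrow> block_pos p k r i \<Longrightarrow> 0 < i \<Longrightarrow> k < i"
  using less_block_start[of p k] by (cases "k = 0") (auto simp: block_pos_def)

lemma count_list_replicate: "count_list (replicate n a) b = (if a = b then n else 0)"
  by (induction n) auto

lemma count_letters: "count_list w L + count_list w S + count_list w M = length w"
proof (induction w)
  case (Cons a w)
  then show ?case by (cases a) auto
qed simp

lemma count_phi_word_S: "count_list (phi_word p w) S + count_list w S = length w"
proof (induction w)
  case (Cons a w)
  then show ?case by (cases a) (auto simp: count_list_replicate)
qed simp

lemma count_phi_word_M: "count_list (phi_word p w) M = count_list w S"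
proof (induction w)
  case (Cons a w)
  then show ?case by (cases a) (auto simp: count_list_replicate)
qed simp

lemma length_phi_word:
  assumes "1 \<le> p"
  shows "length (phi_word p w) + p * count_list w S + count_list w M = (p + 1) * length w"
proof (induction w)
  case (Cons a w)
  then show ?case using assms by (cases a) (auto simp: algebra_simps)
qed simp

definition prefix_count :: "nat \<Rightarrow> letter \<Rightarrow> nat \<Rightarrow> nat" where
  "prefix_count p a i = count_list (map (u p) [0..<i]) a"

lemma prefix_count_add:
  "prefix_count p a (i + n) = prefix_count p a i + count_list (map (u p) [i..<i + n]) a"
  by (simp add: prefix_count_def upt_add_eq_append[of 0 i n])

lemma prefix_count_block_start:
  "1 \<le> p \<Longrightarrow> prefix_count p a (block_start p k) = count_list (phi_word p (map (u p) [0..<k])) a"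
  by (simp add: prefix_count_def map_u_block_start_0)

lemma prefix_count_S_block_start:
  assumes "1 \<le> p"
  shows "prefix_count p S (block_start p k) + prefix_count p S k = k"
  using count_phi_word_S[of p "map (u p) [0..<k]"]
  unfolding prefix_count_block_start[OF assms] by (simp add: prefix_count_def)

lemma prefix_count_M_block_start:
  assumes "1 \<le> p"
  shows "prefix_count p M (block_start p k) = prefix_count p S k"
  unfolding prefix_count_block_start[OF assms] by (simp add: prefix_count_def count_phi_word_M)

lemma block_start_prefix_count:
  "1 \<le> p \<Longrightarrow> block_start p k + p * prefix_count p S k + prefix_count p M k = (p + 1) * k"
  using length_phi_word[of p "map (u p) [0..<k]"] by (simp add: block_start_def prefix_count_def)

lemma take_phi: "r < length (phi p a) \<Longrightarrow> take r (phi p a) = replicate r L"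
  by (cases a) auto

lemma prefix_count_block_start_add:
  assumes "1 \<le> p" and "r < length (phi p (u p k))" and "b \<noteq> L"
  shows "prefix_count p b (block_start p k + r) = prefix_count p b (block_start p k)"
proof -
  have "map (u p) [block_start p k..<block_start p k + r] = take r (phi p (u p k))"
    using assms(2) by (intro nth_equalityI) (simp_all add: u_block_start_add[OF assms(1)])
  then show ?thesis
    using assms(2,3) by (simp add: prefix_count_add take_phi count_list_replicate)
qed

lemma prefix_count_S_block:
  assumes "1 \<le> p" and "r < length (phi p (u p k))"
  shows "int (prefix_count p S (block_start p k + r)) = int k - int (prefix_count p S k)"
  using prefix_count_block_start_add[OF assms] prefix_count_S_block_start[OF assms(1), of k] by simp

lemma prefix_count_M_block:
  assumes "1 \<le> p" and "r < length (phi p (u p k))"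
  shows "prefix_count p M (block_start p k + r) = prefix_count p S k"
  using prefix_count_block_start_add[OF assms] prefix_count_M_block_start[OF assms(1)] by simp

section \<open>Pairs of windows\<close>

text \<open>The state \<open>(d, s, m, c1, c3)\<close> of a pair of windows \<open>[i1..<i2]\<close>, \<open>[i3..<i4]\<close> of \<open>u p\<close>
  records the differences of their lengths, of their numbers of \<open>S\<close> and of their numbers of
  \<open>M\<close>, and their first letters.\<close>
type_synonym state = "int \<times> int \<times> int \<times> letter \<times> letter"

definition count_diff :: "nat \<Rightarrow> letter \<Rightarrow> nat \<Rightarrow> nat \<Rightarrow> nat \<Rightarrow> nat \<Rightarrow> int" where
  "count_diff p a i1 i2 i3 i4 =
     (int (prefix_count p a i2) - int (prefix_count p a i1)) -
     (int (prefix_count p a i4) - int (prefix_count p a i3))"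

definition window_state :: "nat \<Rightarrow> nat \<Rightarrow> nat \<Rightarrow> nat \<Rightarrow> nat \<Rightarrow> state" where
  "window_state p i1 i2 i3 i4 =
     ((int i2 - int i1) - (int i4 - int i3), count_diff p S i1 i2 i3 i4, count_diff p M i1 i2 i3 i4,
      u p i1, u p i3)"

fun image_diff :: "nat \<Rightarrow> state \<Rightarrow> int" where
  "image_diff p (d, s, m, _, _) = (int p + 1) * d - int p * s - m"

lemma image_diff_window_state:
  assumes "1 \<le> p"
  shows "image_diff p (window_state p k1 k2 k3 k4) =
    (int (block_start p k2) - int (block_start p k1)) - (int (block_start p k4) - int (block_start p k3))"
proof -
  have block_start: "int (block_start p k) =
      (int p + 1) * int k - int p * int (prefix_count p S k) - int (prefix_count p M k)" for k
    using arg_cong[OF block_start_prefix_count[OF assms, of k], of int] by (simp add: algebra_simps)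
  show ?thesis by (simp add: block_start window_state_def count_diff_def algebra_simps)
qed

text \<open>The windows \<open>[block_start p k1 + r1..<block_start p k2 + r2]\<close> and
  \<open>[block_start p k3 + r3..<block_start p k4 + r4]\<close> are the images under \<open>phi p\<close> of the parent
  windows \<open>[k1..<k2]\<close> and \<open>[k3..<k4]\<close>, trimmed by \<open>r1\<close>, \<open>r3\<close> letters at the front and extended by
  \<open>r2\<close>, \<open>r4\<close> letters at the back; \<open>r2, r4 \<le> p\<close> because a block has at most \<open>p + 1\<close> letters.\<close>
fun phi_step :: "nat \<Rightarrow> state \<Rightarrow> state \<Rightarrow> bool" where
  "phi_step p (d, s, m, c1, c3) t \<longleftrightarrow>
     (\<exists>r1 r2 r3 r4. r1 < length (phi p c1) \<and> r3 < length (phi p c3) \<and> r2 \<le> p \<and> r4 \<le> p \<and>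
        t = (image_diff p (d, s, m, c1, c3) + int r2 - int r1 - int r4 + int r3, d - s, s,
             phi p c1 ! r1, phi p c3 ! r3))"

lemma phi_step_window_state:
  assumes p: "1 \<le> p"
    and i: "block_pos p k1 r1 i1" "block_pos p k2 r2 i2" "block_pos p k3 r3 i3" "block_pos p k4 r4 i4"
  shows "phi_step p (window_state p k1 k2 k3 k4) (window_state p i1 i2 i3 i4)"
proof -
  note i_def = i[unfolded block_pos_def]
  have "r2 \<le> p" "r4 \<le> p"
    using i_def length_phi_le[OF p, of "u p k2"] length_phi_le[OF p, of "u p k4"] by simp_all
  moreover have "fst (window_state p i1 i2 i3 i4) =
      image_diff p (window_state p k1 k2 k3 k4) + int r2 - int r1 - int r4 + int r3"
    unfolding image_diff_window_state[OF p] using i_def by (simp add: window_state_def)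
  moreover have "count_diff p S i1 i2 i3 i4 = fst (window_state p k1 k2 k3 k4) - count_diff p S k1 k2 k3 k4"
    using i_def by (simp add: count_diff_def window_state_def prefix_count_S_block[OF p])
  moreover have "count_diff p M i1 i2 i3 i4 = count_diff p S k1 k2 k3 k4"
    using i_def by (simp add: count_diff_def prefix_count_M_block[OF p])
  moreover have "u p i1 = phi p (u p k1) ! r1" "u p i3 = phi p (u p k3) ! r3"
    using i_def u_block_start_add[OF p] by simp_all
  ultimately show ?thesis
    unfolding window_state_def[of p k1 k2 k3 k4] phi_step.simps
    using i_def by (intro exI[of _ r1] exI[of _ r2] exI[of _ r3] exI[of _ r4]) (simp add: window_state_def)
qed

section \<open>Certificates for 3-balancedness\<close>

text \<open>A certificate \<open>Inv\<close> over-approximates the states of window pairs whose lengths differ by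
  at most \<open>E\<close>. By \<open>Inv_upper\<close> and \<open>Inv_lower\<close>, a parent pair whose lengths differ by exactly
  \<open>\<plusminus>E\<close> only has children whose lengths differ by more than \<open>E\<close>; this keeps the
  induction over parents inside the range where \<open>Inv\<close> is known.\<close>
locale balance_certificate =
  fixes p :: nat and E :: int and Inv :: "state \<Rightarrow> bool"
  assumes p_pos: "1 \<le> p"
    and E_nonneg: "0 \<le> E"
    and Inv_initial: "Inv (0, 0, 0, L, L)"
    and Inv_phi_step: "\<And>t' t. Inv t' \<Longrightarrow> phi_step p t' t \<Longrightarrow> \<bar>fst t'\<bar> \<le> E \<Longrightarrow> \<bar>fst t\<bar> \<le> E \<Longrightarrow> Inv t"
    and Inv_upper: "\<And>s m c1 c3. Inv (E, s, m, c1, c3) \<Longrightarrow>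
      E < image_diff p (E, s, m, c1, c3) + 2 - int (length (phi p c1)) - int p"
    and Inv_lower: "\<And>s m c1 c3. Inv (-E, s, m, c1, c3) \<Longrightarrow>
      image_diff p (-E, s, m, c1, c3) - 2 + int (length (phi p c3)) + int p < -E"
    and Inv_balanced: "\<And>t' s m c1 c3. Inv t' \<Longrightarrow> \<bar>fst t'\<bar> \<le> E \<Longrightarrow> phi_step p t' (0, s, m, c1, c3) \<Longrightarrow>
      Inv (0, s, m, c1, c3) \<Longrightarrow> \<bar>s\<bar> \<le> 3 \<and> \<bar>m\<bar> \<le> 3 \<and> \<bar>s + m\<bar> \<le> 3"
begin

lemma parent_fst_le:
  assumes Inv_shorter: "\<And>j. k1 \<le> j \<Longrightarrow> j < k2 \<Longrightarrow> fst (window_state p k1 j k3 k4) = E \<Longrightarrow>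
      Inv (window_state p k1 j k3 k4)"
    and i: "block_pos p k1 r1 i1" "block_pos p k2 r2 i2" "block_pos p k3 r3 i3" "block_pos p k4 r4 i4"
    and "k3 \<le> k4" and "fst (window_state p i1 i2 i3 i4) \<le> E"
  shows "fst (window_state p k1 k2 k3 k4) \<le> E"
proof (rule ccontr)
  assume too_long: "\<not> fst (window_state p k1 k2 k3 k4) \<le> E"
  define j where "j = k1 + (k4 - k3) + nat E"
  have j: "k1 \<le> j" "j < k2" and fst_j: "fst (window_state p k1 j k3 k4) = E"
    using too_long \<open>k3 \<le> k4\<close> E_nonneg by (auto simp: j_def window_state_def)
  then obtain s m where j_state: "window_state p k1 j k3 k4 = (E, s, m, u p k1, u p k3)"
    by (simp add: window_state_def)
  have "E < (int (block_start p j) - int (block_start p k1)) - (int (block_start p k4) - int (block_start p k3))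
      + 2 - int (length (phi p (u p k1))) - int p"
    using Inv_upper[of s m "u p k1" "u p k3", folded j_state] Inv_shorter[OF j fst_j]
    unfolding image_diff_window_state[OF p_pos] by blast
  moreover have "block_start p j < block_start p k2"
    using block_start_less_Suc block_start_mono[of "Suc j" k2 p] j by (meson Suc_leI order_less_le_trans)
  moreover have "r4 \<le> p"
    using i(4) length_phi_le[OF p_pos, of "u p k4"] by (simp add: block_pos_def)
  ultimately show False
    using \<open>fst (window_state p i1 i2 i3 i4) \<le> E\<close> i
    by (simp add: window_state_def block_pos_def)
qed

lemma parent_fst_ge:
  assumes Inv_shorter: "\<And>j. k3 \<le> j \<Longrightarrow> j < k4 \<Longrightarrow> fst (window_state p k1 k2 k3 j) = -E \<Longrightarrow>
      Inv (window_state p k1 k2 k3 j)"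
    and i: "block_pos p k1 r1 i1" "block_pos p k2 r2 i2" "block_pos p k3 r3 i3" "block_pos p k4 r4 i4"
    and "k1 \<le> k2" and "-E \<le> fst (window_state p i1 i2 i3 i4)"
  shows "-E \<le> fst (window_state p k1 k2 k3 k4)"
proof (rule ccontr)
  assume too_short: "\<not> -E \<le> fst (window_state p k1 k2 k3 k4)"
  define j where "j = k3 + (k2 - k1) + nat E"
  have j: "k3 \<le> j" "j < k4" and fst_j: "fst (window_state p k1 k2 k3 j) = -E"
    using too_short \<open>k1 \<le> k2\<close> E_nonneg by (auto simp: j_def window_state_def)
  then obtain s m where j_state: "window_state p k1 k2 k3 j = (-E, s, m, u p k1, u p k3)"
    by (simp add: window_state_def)
  have "(int (block_start p k2) - int (block_start p k1)) - (int (block_start p j) - int (block_start p k3))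
      - 2 + int (length (phi p (u p k3))) + int p < -E"
    using Inv_lower[of s m "u p k1" "u p k3", folded j_state] Inv_shorter[OF j fst_j]
    unfolding image_diff_window_state[OF p_pos] by blast
  moreover have "block_start p j < block_start p k4"
    using block_start_less_Suc block_start_mono[of "Suc j" k4 p] j by (meson Suc_leI order_less_le_trans)
  moreover have "r2 \<le> p"
    using i(2) length_phi_le[OF p_pos, of "u p k2"] by (simp add: block_pos_def)
  ultimately show False
    using \<open>-E \<le> fst (window_state p i1 i2 i3 i4)\<close> i
    by (simp add: window_state_def block_pos_def)
qed

lemma parent_Inv:
  assumes Inv_below: "\<And>j1 j2 j3 j4. j1 \<le> j2 \<Longrightarrow> j3 \<le> j4 \<Longrightarrow> j2 + j4 \<le> k2 + k4 \<Longrightarrow>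
      \<bar>fst (window_state p j1 j2 j3 j4)\<bar> \<le> E \<Longrightarrow> Inv (window_state p j1 j2 j3 j4)"
    and i: "block_pos p k1 r1 i1" "block_pos p k2 r2 i2" "block_pos p k3 r3 i3" "block_pos p k4 r4 i4"
    and "i1 \<le> i2" "i3 \<le> i4" "\<bar>fst (window_state p i1 i2 i3 i4)\<bar> \<le> E"
  shows "\<bar>fst (window_state p k1 k2 k3 k4)\<bar> \<le> E \<and> Inv (window_state p k1 k2 k3 k4)"
proof -
  have k: "k1 \<le> k2" "k3 \<le> k4"
    using block_pos_mono i \<open>i1 \<le> i2\<close> \<open>i3 \<le> i4\<close> by blast+
  have "fst (window_state p k1 k2 k3 k4) \<le> E"
    using parent_fst_le[OF _ i k(2)] Inv_below k \<open>\<bar>fst (window_state p i1 i2 i3 i4)\<bar> \<le> E\<close> E_nonneg by simp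
  moreover have "-E \<le> fst (window_state p k1 k2 k3 k4)"
    using parent_fst_ge[OF _ i k(1)] Inv_below k \<open>\<bar>fst (window_state p i1 i2 i3 i4)\<bar> \<le> E\<close> E_nonneg by simp
  ultimately show ?thesis using Inv_below k by simp
qed

lemma Inv_window_state:
  assumes "i1 \<le> i2" "i3 \<le> i4" "\<bar>fst (window_state p i1 i2 i3 i4)\<bar> \<le> E"
  shows "Inv (window_state p i1 i2 i3 i4)"
  using assms
proof (induction "i2 + i4" arbitrary: i1 i2 i3 i4 rule: less_induct)
  case less
  show ?case
  proof (cases "i2 + i4 = 0")
    case True
    then have "window_state p i1 i2 i3 i4 = (0, 0, 0, L, L)"
      using less.prems u_0[OF p_pos] by (simp add: window_state_def count_diff_def)
    then show ?thesis using Inv_initial by simp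
  next
    case False
    obtain k1 k2 k3 k4 r1 r2 r3 r4 where
      i: "block_pos p k1 r1 i1" "block_pos p k2 r2 i2" "block_pos p k3 r3 i3" "block_pos p k4 r4 i4"
      using block_decomp by metis
    have "k2 + k4 < i2 + i4"
      using False block_pos_le[OF i(2)] block_pos_le[OF i(4)]
        block_pos_less[OF p_pos i(2)] block_pos_less[OF p_pos i(4)] by linarith
    then have "\<bar>fst (window_state p k1 k2 k3 k4)\<bar> \<le> E \<and> Inv (window_state p k1 k2 k3 k4)"
      using parent_Inv[OF _ i less.prems] less.hyps by simp
    then show ?thesis
      using Inv_phi_step phi_step_window_state[OF p_pos i] less.prems(3) by blast
  qed
qed

lemma window_counts_balanced:
  "\<bar>count_diff p S i (i + n) j (j + n)\<bar> \<le> 3 \<and> \<bar>count_diff p M i (i + n) j (j + n)\<bar> \<le> 3 \<and>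
   \<bar>count_diff p S i (i + n) j (j + n) + count_diff p M i (i + n) j (j + n)\<bar> \<le> 3"
proof -
  let ?t = "window_state p i (i + n) j (j + n)"
  have t: "?t = (0, count_diff p S i (i + n) j (j + n), count_diff p M i (i + n) j (j + n), u p i, u p j)"
    by (simp add: window_state_def)
  then have "\<bar>fst ?t\<bar> \<le> E" using E_nonneg by simp
  obtain k1 k2 k3 k4 r1 r2 r3 r4 where
    k: "block_pos p k1 r1 i" "block_pos p k2 r2 (i + n)" "block_pos p k3 r3 j" "block_pos p k4 r4 (j + n)"
    using block_decomp by metis
  have "\<bar>fst (window_state p k1 k2 k3 k4)\<bar> \<le> E \<and> Inv (window_state p k1 k2 k3 k4)"
    using parent_Inv[OF Inv_window_state k _ _ \<open>\<bar>fst ?t\<bar> \<le> E\<close>] by simp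
  moreover have "Inv ?t"
    using Inv_window_state \<open>\<bar>fst ?t\<bar> \<le> E\<close> by simp
  ultimately show ?thesis
    using Inv_balanced phi_step_window_state[OF p_pos k] by (simp only: t) blast
qed

theorem balanced_3: "balanced 3 (u p)"
  unfolding balanced_def
proof (intro allI impI, elim conjE)
  fix a v w
  assume "v \<in> factors (u p)" "w \<in> factors (u p)" "length v = length w"
  then obtain i j n where v: "v = map (u p) [i..<i + n]" and w: "w = map (u p) [j..<j + n]"
    by (auto simp: factors_def)
  have count: "int (count_list (map (u p) [k..<k + n]) b) = int (prefix_count p b (k + n)) - int (prefix_count p b k)"
    for k b using prefix_count_add[of p b k n] by simp
  have "int (count_list v L) - int (count_list w L) =
      - (count_diff p S i (i + n) j (j + n) + count_diff p M i (i + n) j (j + n))"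
    using count_letters[of v] count_letters[of w] count[of i S] count[of i M] count[of j S] count[of j M]
      count[of i L] count[of j L] unfolding v w count_diff_def length_map length_upt by linarith
  then show "\<bar>int (count_list v a) - int (count_list w a)\<bar> \<le> int 3"
    using window_counts_balanced[of i n j] count[of i] count[of j]
    by (cases a; simp add: v w count_diff_def; linarith)
qed

end

lemma phi_nth:
  "r < length (phi p c) \<Longrightarrow> phi p c ! r = (if Suc r < length (phi p c) then L else last (phi p c))"
  by (cases c) (auto simp: nth_append last_conv_nth)

type_synonym interval_table = "letter \<Rightarrow> letter \<Rightarrow> int \<Rightarrow> int \<Rightarrow> int \<times> int"

text \<open>A table gives, for the first letters and the differences \<open>s\<close>, \<open>m\<close>, an interval of admissible
  length differences \<open>d\<close>; an empty interval (\<open>lo > hi\<close>) excludes the key. The bounds on \<open>s\<close> and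
  \<open>m\<close> make the checks below finite.\<close>
fun table_inv :: "interval_table \<Rightarrow> state \<Rightarrow> bool" where
  "table_inv tb (d, s, m, c1, c3) \<longleftrightarrow>
     \<bar>s\<bar> \<le> 6 \<and> \<bar>m\<bar> \<le> 6 \<and> fst (tb c1 c3 s m) \<le> d \<and> d \<le> snd (tb c1 c3 s m)"

text \<open>For \<open>r\<close> in the range \<open>[lo, hi]\<close> of an entry \<open>(lo, hi, a)\<close>, \<open>phi p c ! r = a\<close>.\<close>
definition letter_ranges :: "nat \<Rightarrow> letter \<Rightarrow> (int \<times> int \<times> letter) list" where
  "letter_ranges p c =
     (let n = int (length (phi p c)) in
      (if 2 \<le> n then [(0, n - 2, L)] else []) @ [(n - 1, n - 1, last (phi p c))])"

text \<open>All children of the parent state with \<open>r1\<close>, \<open>r3\<close> in the given ranges and length difference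
  in \<open>[-E, E]\<close> have length differences in \<open>[lo, hi]\<close>; they must lie in the interval of their key.\<close>
fun step_within_table ::
    "nat \<Rightarrow> int \<Rightarrow> interval_table \<Rightarrow> state \<Rightarrow> int \<times> int \<times> letter \<Rightarrow> int \<times> int \<times> letter \<Rightarrow> bool" where
  "step_within_table p E tb (d, s, m, c1, c3) (lo1, hi1, a1) (lo3, hi3, a3) \<longleftrightarrow>
     (let base = image_diff p (d, s, m, c1, c3);
          lo = max (base - int p - hi1 + lo3) (- E);
          hi = min (base + int p - lo1 + hi3) E
      in lo \<le> hi \<longrightarrow>
         \<bar>d - s\<bar> \<le> 6 \<and> \<bar>s\<bar> \<le> 6 \<and> (case tb a1 a3 (d - s) s of (l, h) \<Rightarrow> l \<le> lo \<and> hi \<le> h))"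

definition table_closed :: "nat \<Rightarrow> int \<Rightarrow> interval_table \<Rightarrow> bool" where
  "table_closed p E tb \<longleftrightarrow>
     (\<forall>c1\<in>set [L, S, M]. \<forall>c3\<in>set [L, S, M].
      \<forall>x1\<in>set (letter_ranges p c1). \<forall>x3\<in>set (letter_ranges p c3).
      \<forall>s\<in>set [-6..6]. \<forall>m\<in>set [-6..6]. \<forall>d\<in>set [fst (tb c1 c3 s m)..snd (tb c1 c3 s m)].
        step_within_table p E tb (d, s, m, c1, c3) x1 x3)"

definition table_bounds :: "nat \<Rightarrow> int \<Rightarrow> interval_table \<Rightarrow> bool" where
  "table_bounds p E tb \<longleftrightarrow>
     (\<forall>c1\<in>set [L, S, M]. \<forall>c3\<in>set [L, S, M]. \<forall>s\<in>set [-6..6]. \<forall>m\<in>set [-6..6].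
       (table_inv tb (E, s, m, c1, c3) \<longrightarrow>
          E < image_diff p (E, s, m, c1, c3) + 2 - int (length (phi p c1)) - int p) \<and>
       (table_inv tb (-E, s, m, c1, c3) \<longrightarrow>
          image_diff p (-E, s, m, c1, c3) - 2 + int (length (phi p c3)) + int p < -E) \<and>
       (table_inv tb (0, s, m, c1, c3) \<longrightarrow> \<bar>s\<bar> \<le> 3 \<and> \<bar>m\<bar> \<le> 3 \<and> \<bar>s + m\<bar> \<le> 3))"

definition table_certificate :: "nat \<Rightarrow> int \<Rightarrow> interval_table \<Rightarrow> bool" where
  "table_certificate p E tb \<longleftrightarrow>
     0 \<le> E \<and> table_inv tb (0, 0, 0, L, L) \<and> table_bounds p E tb \<and> table_closed p E tb"

lemma letter_in_list: "c \<in> set [L, S, M]"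
  by (cases c) auto

lemma letter_ranges_cover:
  assumes "r < length (phi p c)"
  obtains lo hi where "(lo, hi, phi p c ! r) \<in> set (letter_ranges p c)" "lo \<le> int r" "int r \<le> hi"
proof (cases "Suc r < length (phi p c)")
  case True
  then show ?thesis
    using that[of 0 "int (length (phi p c)) - 2"] phi_nth[OF assms] by (simp add: letter_ranges_def Let_def)
next
  case False
  then show ?thesis
    using that[of "int r" "int r"] phi_nth[OF assms] assms by (simp add: letter_ranges_def Let_def)
qed

lemma table_inv_phi_step:
  assumes p: "1 \<le> p" and closed: "table_closed p E tb"
    and t': "table_inv tb (d', s', m', c1, c3)" and step: "phi_step p (d', s', m', c1, c3) t"
    and "\<bar>fst t\<bar> \<le> E"
  shows "table_inv tb t"
proof -
  obtain r1 r2 r3 r4 where r: "r1 < length (phi p c1)" "r3 < length (phi p c3)" "r2 \<le> p" "r4 \<le> p"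
    and t: "t = (image_diff p (d', s', m', c1, c3) + int r2 - int r1 - int r4 + int r3, d' - s', s',
                 phi p c1 ! r1, phi p c3 ! r3)"
    using step by auto
  obtain lo1 hi1 where x1: "(lo1, hi1, phi p c1 ! r1) \<in> set (letter_ranges p c1)" "lo1 \<le> int r1" "int r1 \<le> hi1"
    using letter_ranges_cover[OF r(1)] .
  obtain lo3 hi3 where x3: "(lo3, hi3, phi p c3 ! r3) \<in> set (letter_ranges p c3)" "lo3 \<le> int r3" "int r3 \<le> hi3"
    using letter_ranges_cover[OF r(2)] .
  have "s' \<in> set [-6..6]" "m' \<in> set [-6..6]" "d' \<in> set [fst (tb c1 c3 s' m')..snd (tb c1 c3 s' m')]"
    using t' by auto
  then have "step_within_table p E tb (d', s', m', c1, c3) (lo1, hi1, phi p c1 ! r1) (lo3, hi3, phi p c3 ! r3)"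
    using closed x1(1) x3(1) letter_in_list[of c1] letter_in_list[of c3] unfolding table_closed_def by blast
  moreover
  let ?base = "image_diff p (d', s', m', c1, c3)"
  let ?lo = "max (?base - int p - hi1 + lo3) (- E)" and ?hi = "min (?base + int p - lo1 + hi3) E"
  have lo: "?lo \<le> fst t" and hi: "fst t \<le> ?hi"
    using r(3,4) x1(2,3) x3(2,3) \<open>\<bar>fst t\<bar> \<le> E\<close> unfolding t fst_conv by linarith+
  moreover obtain l' h' where lh': "tb (phi p c1 ! r1) (phi p c3 ! r3) (d' - s') s' = (l', h')"
    by fastforce
  ultimately have "\<bar>d' - s'\<bar> \<le> 6" "\<bar>s'\<bar> \<le> 6" "l' \<le> fst t" "fst t \<le> h'"
    unfolding step_within_table.simps Let_def lh' case_prod_conv by (meson order_trans)+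
  moreover have "t = (fst t, d' - s', s', phi p c1 ! r1, phi p c3 ! r3)"
    by (simp add: t)
  ultimately show ?thesis
    using lh' by (metis table_inv.simps fst_conv snd_conv)
qed

lemma table_certificate_sound:
  assumes p: "1 \<le> p" and cert: "table_certificate p E tb"
  shows "balance_certificate p E (table_inv tb)"
proof -
  have bounds: "table_bounds p E tb" and closed: "table_closed p E tb"
    using cert by (simp_all add: table_certificate_def)
  have bounds_at: "(table_inv tb (E, s, m, c1, c3) \<longrightarrow>
          E < image_diff p (E, s, m, c1, c3) + 2 - int (length (phi p c1)) - int p) \<and>
       (table_inv tb (-E, s, m, c1, c3) \<longrightarrow>
          image_diff p (-E, s, m, c1, c3) - 2 + int (length (phi p c3)) + int p < -E) \<and>
       (table_inv tb (0, s, m, c1, c3) \<longrightarrow> \<bar>s\<bar> \<le> 3 \<and> \<bar>m\<bar> \<le> 3 \<and> \<bar>s + m\<bar> \<le> 3)"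
    if "\<bar>s\<bar> \<le> 6" "\<bar>m\<bar> \<le> 6" for s m c1 c3
  proof -
    have "s \<in> set [-6..6]" "m \<in> set [-6..6]" using that by auto
    then show ?thesis
      using bounds letter_in_list[of c1] letter_in_list[of c3] unfolding table_bounds_def by blast
  qed
  show ?thesis
  proof
    fix t' t
    assume "table_inv tb t'" "phi_step p t' t" "\<bar>fst t\<bar> \<le> E"
    then show "table_inv tb t"
      using table_inv_phi_step[OF p closed] by (cases t') blast
  qed (use p cert bounds_at in \<open>auto simp: table_certificate_def\<close>)
qed

section \<open>A certificate for \<open>p \<ge> 7\<close>\<close>

lemma phi_step_estimate:
  assumes "1 \<le> p" and "phi_step p (d', s', m', c1, c3) (d, s, m, a1, a3)"
  shows "\<bar>d - (int p * (d' - s') + d' - m')\<bar> \<le> 2 * int p \<and> s = d' - s' \<and> m = s'"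
proof -
  obtain r1 r2 r3 r4 where r: "r1 < length (phi p c1)" "r3 < length (phi p c3)" "r2 \<le> p" "r4 \<le> p"
    and "d = (int p + 1) * d' - int p * s' - m' + int r2 - int r1 - int r4 + int r3" "s = d' - s'" "m = s'"
    using assms(2) by auto
  moreover have "r1 \<le> p" "r3 \<le> p"
    using r length_phi_le[OF assms(1), of c1] length_phi_le[OF assms(1), of c3] by simp_all
  ultimately show ?thesis by (simp add: algebra_simps)
qed

fun large_p_inv :: "state \<Rightarrow> bool" where
  "large_p_inv (d, s, m, _, _) \<longleftrightarrow> \<bar>s\<bar> \<le> 2 \<and> \<bar>m\<bar> \<le> 2 \<and> (s = 2 \<longrightarrow> -2 \<le> d) \<and> (s = -2 \<longrightarrow> d \<le> 2)"

lemma large_p_inv_phi_step: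
  assumes p: "7 \<le> p" and "large_p_inv (d', s', m', c1, c3)" and "phi_step p (d', s', m', c1, c3) (d, s, m, a1, a3)"
    and "\<bar>d\<bar> \<le> 5"
  shows "large_p_inv (d, s, m, a1, a3)"
proof -
  define q where "q = d' - s'"
  have parent: "\<bar>s'\<bar> \<le> 2" "\<bar>m'\<bar> \<le> 2"
    using assms(2) by simp_all
  have step: "\<bar>d - (int p * q + d' - m')\<bar> \<le> 2 * int p" "s = q" "m = s'"
    using phi_step_estimate[OF _ assms(3)] p by (simp_all add: q_def)
  have "q \<le> 2"
  proof (rule ccontr)
    assume "\<not> q \<le> 2"
    then have "int p * 3 \<le> int p * q" by (intro mult_left_mono) auto
    then show False using step parent p \<open>\<not> q \<le> 2\<close> \<open>\<bar>d\<bar> \<le> 5\<close> q_def by linarith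
  qed
  moreover have "-2 \<le> q"
  proof (rule ccontr)
    assume "\<not> -2 \<le> q"
    then have "int p * q \<le> int p * (-3)" by (intro mult_left_mono) auto
    then show False using step parent p \<open>\<not> -2 \<le> q\<close> \<open>\<bar>d\<bar> \<le> 5\<close> q_def by linarith
  qed
  moreover have "-2 \<le> d" if "q = 2"
    using step parent q_def that by simp
  moreover have "d \<le> 2" if "q = -2"
    using step parent q_def that by simp
  ultimately show ?thesis using step parent by simp
qed

lemma large_p_inv_balanced:
  assumes p: "7 \<le> p" and "large_p_inv (d', s', m', c1, c3)"
    and "phi_step p (d', s', m', c1, c3) (0, s, m, a1, a3)" and "large_p_inv (0, s, m, a1, a3)"
  shows "\<bar>s\<bar> \<le> 3 \<and> \<bar>m\<bar> \<le> 3 \<and> \<bar>s + m\<bar> \<le> 3"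
proof -
  define q where "q = d' - s'"
  have step: "\<bar>0 - (int p * q + d' - m')\<bar> \<le> 2 * int p" "s = q" "m = s'"
    using phi_step_estimate[OF _ assms(3)] p by (simp_all add: q_def)
  have bounds: "\<bar>s'\<bar> \<le> 2" "\<bar>m'\<bar> \<le> 2" "\<bar>q\<bar> \<le> 2"
    using assms(2,4) step(2) by simp_all
  have "s' \<noteq> 2" if "q = 2"
    using step(1) bounds q_def that by simp
  moreover have "s' \<noteq> -2" if "q = -2"
    using step(1) bounds q_def that by simp
  ultimately show ?thesis
    using step(2,3) bounds by presburger
qed

lemma large_p_certificate:
  assumes p: "7 \<le> p"
  shows "balance_certificate p 5 large_p_inv"
proof
  show "1 \<le> p" using p by simp
  show "0 \<le> (5::int)" by simp
  show "large_p_inv (0, 0, 0, L, L)" by simp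
next
  fix t' t
  assume "large_p_inv t'" "phi_step p t' t" "\<bar>fst t\<bar> \<le> 5"
  moreover obtain d' s' m' c1 c3 where "t' = (d', s', m', c1, c3)" by (cases t') auto
  moreover obtain d s m a1 a3 where "t = (d, s, m, a1, a3)" by (cases t) auto
  ultimately show "large_p_inv t"
    using large_p_inv_phi_step[OF p] by (simp only: fst_conv)
next
  fix s m c1 c3
  assume "large_p_inv (5, s, m, c1, c3)"
  then have "s \<le> 2" "m \<le> 2" by auto
  have "int p * s \<le> int p * 2" using \<open>s \<le> 2\<close> by (intro mult_left_mono) simp_all
  moreover note \<open>m \<le> 2\<close>
  moreover have "int (length (phi p c1)) \<le> int p + 1" using length_phi_le[of p c1] p by simp
  ultimately show "5 < image_diff p (5, s, m, c1, c3) + 2 - int (length (phi p c1)) - int p"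
    unfolding image_diff.simps using p by (simp only: distrib_right)
next
  fix s m c1 c3
  assume "large_p_inv (-5, s, m, c1, c3)"
  then have "-2 \<le> s" "-2 \<le> m" by auto
  have "int p * (-2) \<le> int p * s" using \<open>-2 \<le> s\<close> by (intro mult_left_mono) simp_all
  moreover note \<open>-2 \<le> m\<close>
  moreover have "int (length (phi p c3)) \<le> int p + 1" using length_phi_le[of p c3] p by simp
  ultimately show "image_diff p (-5, s, m, c1, c3) - 2 + int (length (phi p c3)) + int p < -5"
    unfolding image_diff.simps using p by (simp only: distrib_right)
next
  fix t' s m c1 c3
  assume "large_p_inv t'" "\<bar>fst t'\<bar> \<le> 5" "phi_step p t' (0, s, m, c1, c3)" "large_p_inv (0, s, m, c1, c3)"
  moreover obtain d' s' m' a1 a3 where "t' = (d', s', m', a1, a3)" by (cases t') auto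
  ultimately show "\<bar>s\<bar> \<le> 3 \<and> \<bar>m\<bar> \<le> 3 \<and> \<bar>s + m\<bar> \<le> 3"
    using large_p_inv_balanced[OF p] by (simp only:)
qed

section \<open>Factors witnessing that \<open>u p\<close> is not 2-balanced\<close>

lemma map_upt_factor: "map x [i..<j] \<in> factors x"
  unfolding factors_def by (intro CollectI exI[of _ i] exI[of _ "j - i"]) (cases "i \<le> j"; simp)

lemma factor_infix:
  assumes "v @ w @ y \<in> factors x"
  shows "w \<in> factors x"
proof -
  obtain i n where vwy: "v @ w @ y = map x [i..<i + n]" using assms by (auto simp: factors_def)
  then have "w = take (length w) (drop (length v) (map x [i..<i + n]))" by (metis append_eq_conv_conj)
  also have "\<dots> = map x [i + length v..<i + length v + length w]"
    using arg_cong[OF vwy, of length] by (simp add: drop_map take_map take_upt)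
  finally show ?thesis by (metis map_upt_factor)
qed

lemma factor_phi_word:
  assumes "1 \<le> p" and "w \<in> factors (u p)"
  shows "phi_word p w \<in> factors (u p)"
proof -
  obtain i n where "w = map (u p) [i..<i + n]" using assms(2) by (auto simp: factors_def)
  then have "phi_word p w = map (u p) [block_start p i..<block_start p (i + n)]"
    by (simp add: map_u_block_start[OF assms(1)])
  then show ?thesis by (metis map_upt_factor)
qed

lemma L_factor: "1 \<le> p \<Longrightarrow> [L] \<in> factors (u p)"
  using map_upt_factor[of "u p" 0 1] u_0[of p] by simp

definition factor_L_rich :: "nat \<Rightarrow> letter list" where
  "factor_L_rich p = replicate (p - 1) L @ [S] @ concat (replicate (p - 1) (replicate p L @ [S])) @ [L, L, L]"

definition factor_L_poor :: "nat \<Rightarrow> letter list" where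
  "factor_L_poor p = [S, M] @ replicate (p - 1) L @ [S] @ concat (replicate (p - 1) (replicate p L @ [S])) @ [M]"

lemma factor_L_poor:
  assumes "2 \<le> p"
  shows "factor_L_poor p \<in> factors (u p)"
proof -
  have p: "1 \<le> p" using assms by simp
  have L_p: "replicate p L = replicate (p - 1) L @ [L]"
    using p by (metis Suc_diff_le diff_Suc_1 replicate_Suc replicate_append_same)
  have "phi_word p [L] \<in> factors (u p)" using factor_phi_word[OF p L_factor[OF p]] .
  then have "[L, S] \<in> factors (u p)"
    using factor_infix[of "replicate (p - 1) L" "[L, S]" "[]"] by (simp add: L_p)
  from factor_phi_word[OF p this] have "[L, S, M] \<in> factors (u p)"
    using factor_infix[of "replicate (p - 1) L" "[L, S, M]" "[]"] by (simp add: L_p)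
  from factor_phi_word[OF p this] have "[L, S, M] @ replicate (p - 1) L @ [S] \<in> factors (u p)"
    using factor_infix[of "replicate (p - 1) L" "[L, S, M] @ replicate (p - 1) L @ [S]" "[]"] by (simp add: L_p)
  from factor_phi_word[OF p this] have "replicate p L @ factor_L_poor p \<in> factors (u p)"
    by (simp add: factor_L_poor_def phi_word_replicate_L)
  then show ?thesis using factor_infix[of "replicate p L" _ "[]"] by simp
qed

lemma factor_L_rich:
  assumes "3 \<le> p"
  shows "factor_L_rich p \<in> factors (u p)"
proof -
  have p: "1 \<le> p" using assms by simp
  define q where "q = p - 3"
  have q: "p = Suc (Suc (Suc q))" using assms by (simp add: q_def)
  have "phi_word p [L] \<in> factors (u p)" using factor_phi_word[OF p L_factor[OF p]] .
  then have "[L, L] \<in> factors (u p)"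
    using factor_infix[of "[]" "[L, L]" "L # replicate q L @ [S]"] by (simp add: q)
  from factor_phi_word[OF p this] have "[S, L] \<in> factors (u p)"
    using factor_infix[of "replicate p L" "[S, L]" "L # L # replicate q L @ [S]"] by (simp add: q)
  from factor_phi_word[OF p this] have "M # replicate p L \<in> factors (u p)"
    using factor_infix[of "[]" "M # replicate p L" "[S]"] by simp
  note factor_phi_word[OF p this]
  moreover have "phi_word p (M # replicate p L) =
      replicate (p - 1) L @ [S] @ concat (replicate p (replicate p L @ [S]))"
    by (simp add: phi_word_replicate_L)
  moreover have "replicate p (replicate p L @ [S]) =
      replicate (p - 1) (replicate p L @ [S]) @ [[L, L, L] @ replicate q L @ [S]]"
    using q by (simp add: replicate_append_same[symmetric])
  ultimately have "factor_L_rich p @ replicate q L @ [S] \<in> factors (u p)"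
    by (simp add: factor_L_rich_def)
  then show ?thesis using factor_infix[of "[]" _ "replicate q L @ [S]"] by simp
qed

lemma count_list_concat_replicate: "count_list (concat (replicate n w)) a = n * count_list w a"
  by (induction n) auto

lemma not_balanced_witness:
  assumes "v \<in> factors x" "w \<in> factors x" "length v = length w"
    and "int c < \<bar>int (count_list v a) - int (count_list w a)\<bar>"
  shows "\<not> balanced c x"
  using assms unfolding balanced_def by (meson not_le)

lemma not_balanced_2_ge_3:
  assumes "3 \<le> p"
  shows "\<not> balanced 2 (u p)"
proof (rule not_balanced_witness)
  show "factor_L_rich p \<in> factors (u p)" "factor_L_poor p \<in> factors (u p)"
    using factor_L_rich[OF assms] factor_L_poor assms by simp_all
  show "length (factor_L_rich p) = length (factor_L_poor p)"
    by (simp add: factor_L_rich_def factor_L_poor_def length_concat sum_list_replicate)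
  show "int 2 < \<bar>int (count_list (factor_L_rich p) L) - int (count_list (factor_L_poor p) L)\<bar>"
    by (simp add: factor_L_rich_def factor_L_poor_def count_list_concat_replicate count_list_replicate)
qed

lemma not_balanced_2_p_2: "\<not> balanced 2 (u 2)"
proof (rule not_balanced_witness)
  have "length (phi_iter 2 6) = 182" by code_simp
  then have u_2: "map (u 2) [i..<j] = map ((!) (phi_iter 2 6)) [i..<j]" if "j \<le> 182" for i j
    using that by (simp add: u_eq_phi_iter_nth)
  have windows: "map (u 2) [72..<109] = map ((!) (phi_iter 2 6)) [72..<109]"
    "map (u 2) [145..<182] = map ((!) (phi_iter 2 6)) [145..<182]"
    by (rule u_2; simp)+
  have counts: "count_list (map ((!) (phi_iter 2 6)) [72..<109]) L = 22"
    "count_list (map ((!) (phi_iter 2 6)) [145..<182]) L = 19"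
    by code_simp+
  show "map (u 2) [72..<109] \<in> factors (u 2)" "map (u 2) [145..<182] \<in> factors (u 2)"
    by (rule map_upt_factor)+
  show "length (map (u 2) [72..<109]) = length (map (u 2) [145..<182])" by simp
  show "int 2 < \<bar>int (count_list (map (u 2) [72..<109]) L) - int (count_list (map (u 2) [145..<182]) L)\<bar>"
    unfolding windows counts by simp
qed

section \<open>The tables for \<open>2 \<le> p \<le> 6\<close>\<close>

text \<open>\<open>rows c1 c3 s = (m0, [iv0, iv1, \<dots>])\<close> lists the intervals for \<open>m = m0, m0 + 1, \<dots>\<close>; missing
  keys get the empty interval \<open>(1, 0)\<close>. The rows are selected by \<open>if\<close>-chains so that evaluation
  by the simplifier only ever unfolds the selected row.\<close>
fun interval_at :: "int \<Rightarrow> (int \<times> int) list \<Rightarrow> int \<Rightarrow> int \<times> int" where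
  "interval_at m0 [] m = (1, 0)"
| "interval_at m0 (iv # ivs) m = (if m = m0 then iv else interval_at (m0 + 1) ivs m)"

definition row_table :: "(letter \<Rightarrow> letter \<Rightarrow> int \<Rightarrow> int \<times> (int \<times> int) list) \<Rightarrow> interval_table" where
  "row_table rows c1 c3 s m = (case rows c1 c3 s of (m0, ivs) \<Rightarrow> interval_at m0 ivs m)"

fun table_2 :: "letter \<Rightarrow> letter \<Rightarrow> int \<Rightarrow> int \<times> (int \<times> int) list" where
  "table_2 L L s =
    (if s = -4 then (-2, [(-7, -7), (-7, -6), (-7, -6), (-7, -5), (-7, -5)]) else
     if s = -3 then (-3, [(-7, -7), (-7, -5), (-7, -4), (-7, -3), (-7, -2), (-7, -2)]) else
     if s = -2 then (-4, [(-7, -6), (-7, -4), (-7, -2), (-7, -1), (-7, 0), (-7, 1), (-7, 1)]) else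
     if s = -1 then (-4, [(-7, -5), (-7, -2), (-7, 0), (-7, 2), (-7, 3), (-7, 4), (-5, 4), (-2, 5)]) else
     if s = 0 then (-3, [(-7, 0), (-7, 3), (-7, 4), (-6, 6), (-4, 7), (-3, 7), (0, 7)]) else
     if s = 1 then (-3, [(-5, 2), (-4, 5), (-4, 7), (-3, 7), (-2, 7), (0, 7), (2, 7), (5, 7)]) else
     if s = 2 then (-2, [(-1, 7), (-1, 7), (0, 7), (1, 7), (2, 7), (4, 7), (6, 7)]) else
     if s = 3 then (-2, [(2, 7), (2, 7), (3, 7), (4, 7), (5, 7), (7, 7)]) else
     if s = 4 then (-2, [(5, 7), (5, 7), (6, 7), (6, 7), (7, 7)]) else
     (0, []))"
| "table_2 L S s =
    (if s = -5 then (1, [(-7, -7)]) else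
     if s = -4 then (-2, [(-7, -6), (-7, -5), (-7, -5), (-7, -4), (-7, -4)]) else
     if s = -3 then (-4, [(-7, -7), (-7, -6), (-7, -4), (-7, -3), (-7, -2), (-7, -1), (-7, -1)]) else
     if s = -2 then (-4, [(-7, -5), (-7, -3), (-7, -1), (-7, 0), (-7, 1), (-7, 2), (-6, 2)]) else
     if s = -1 then (-4, [(-7, -4), (-7, -1), (-7, 1), (-7, 3), (-7, 4), (-5, 5), (-4, 5), (-1, 6)]) else
     if s = 0 then (-3, [(-6, 1), (-5, 4), (-5, 5), (-4, 7), (-3, 7), (-1, 7), (1, 7)]) else
     if s = 1 then (-3, [(-3, 3), (-2, 6), (-2, 7), (-1, 7), (0, 7), (1, 7), (3, 7), (6, 7)]) else
     if s = 2 then (-2, [(1, 7), (1, 7), (2, 7), (3, 7), (4, 7), (6, 7)]) else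
     if s = 3 then (-2, [(4, 7), (4, 7), (5, 7), (5, 7), (6, 7)]) else
     if s = 4 then (-2, [(7, 7), (7, 7)]) else
     (0, []))"
| "table_2 L M s =
    (if s = -4 then (-1, [(-7, -7), (-7, -7), (-7, -6)]) else
     if s = -3 then (-3, [(-7, -7), (-7, -5), (-7, -4), (-7, -4), (-7, -3)]) else
     if s = -2 then (-4, [(-7, -6), (-7, -5), (-7, -3), (-7, -2), (-7, -1), (-7, 0)]) else
     if s = -1 then (-4, [(-7, -4), (-7, -2), (-7, 0), (-7, 1), (-7, 2), (-6, 3), (-3, 3)]) else
     if s = 0 then (-4, [(-7, -3), (-7, 0), (-7, 2), (-7, 4), (-5, 5), (-4, 6), (-1, 6)]) else
     if s = 1 then (-3, [(-5, 2), (-4, 5), (-4, 6), (-3, 7), (-1, 7), (1, 7), (4, 7)]) else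
     if s = 2 then (-3, [(-2, 4), (-1, 7), (-1, 7), (0, 7), (1, 7), (3, 7), (5, 7)]) else
     if s = 3 then (-2, [(2, 7), (2, 7), (3, 7), (4, 7), (6, 7), (7, 7)]) else
     if s = 4 then (-2, [(5, 7), (5, 7), (6, 7), (7, 7)]) else
     (0, []))"
| "table_2 S L s =
    (if s = -4 then (1, [(-7, -7), (-7, -7)]) else
     if s = -3 then (-2, [(-7, -6), (-7, -5), (-7, -5), (-7, -4), (-7, -4)]) else
     if s = -2 then (-3, [(-7, -6), (-7, -4), (-7, -3), (-7, -2), (-7, -1), (-7, -1)]) else
     if s = -1 then (-4, [(-7, -6), (-7, -3), (-7, -1), (-7, 0), (-7, 1), (-7, 2), (-6, 2), (-3, 3)]) else
     if s = 0 then (-3, [(-7, -1), (-7, 1), (-7, 3), (-7, 4), (-5, 5), (-4, 5), (-1, 6)]) else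
     if s = 1 then (-3, [(-6, 1), (-5, 4), (-5, 5), (-4, 7), (-3, 7), (-1, 7), (1, 7), (4, 7)]) else
     if s = 2 then (-2, [(-2, 6), (-2, 7), (-1, 7), (0, 7), (1, 7), (3, 7), (5, 7)]) else
     if s = 3 then (-2, [(1, 7), (1, 7), (2, 7), (3, 7), (4, 7), (6, 7), (7, 7)]) else
     if s = 4 then (-2, [(4, 7), (4, 7), (5, 7), (5, 7), (6, 7)]) else
     if s = 5 then (-1, [(7, 7)]) else
     (0, []))"
| "table_2 S S s =
    (if s = -4 then (-1, [(-7, -7), (-7, -7), (-7, -6), (-7, -6)]) else
     if s = -3 then (-3, [(-7, -7), (-7, -5), (-7, -4), (-7, -4), (-7, -3), (-7, -3)]) else
     if s = -2 then (-4, [(-7, -7), (-7, -5), (-7, -3), (-7, -2), (-7, -1), (-7, 0), (-7, 0)]) else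
     if s = -1 then (-4, [(-7, -5), (-7, -2), (-7, 0), (-7, 1), (-7, 2), (-6, 3), (-5, 3), (-2, 4)]) else
     if s = 0 then (-3, [(-7, 0), (-6, 2), (-6, 4), (-5, 5), (-4, 6), (-2, 6), (0, 7)]) else
     if s = 1 then (-3, [(-4, 2), (-3, 5), (-3, 6), (-2, 7), (-1, 7), (0, 7), (2, 7), (5, 7)]) else
     if s = 2 then (-2, [(0, 7), (0, 7), (1, 7), (2, 7), (3, 7), (5, 7), (7, 7)]) else
     if s = 3 then (-2, [(3, 7), (3, 7), (4, 7), (4, 7), (5, 7), (7, 7)]) else
     if s = 4 then (-2, [(6, 7), (6, 7), (7, 7), (7, 7)]) else
     (0, []))"
| "table_2 S M s =
    (if s = -3 then (-2, [(-7, -7), (-7, -6), (-7, -6), (-7, -5)]) else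
     if s = -2 then (-3, [(-7, -6), (-7, -4), (-7, -3), (-7, -3), (-7, -2)]) else
     if s = -1 then (-4, [(-7, -6), (-7, -4), (-7, -2), (-7, -1), (-7, 0), (-7, 1), (-4, 1)]) else
     if s = 0 then (-4, [(-7, -4), (-7, -1), (-7, 1), (-7, 2), (-6, 3), (-5, 4), (-2, 4)]) else
     if s = 1 then (-3, [(-6, 1), (-5, 3), (-5, 5), (-4, 6), (-2, 7), (0, 7), (3, 7)]) else
     if s = 2 then (-3, [(-3, 3), (-2, 6), (-2, 7), (-1, 7), (0, 7), (2, 7), (4, 7)]) else
     if s = 3 then (-2, [(1, 7), (1, 7), (2, 7), (3, 7), (5, 7), (6, 7)]) else
     if s = 4 then (-2, [(4, 7), (4, 7), (5, 7), (6, 7), (7, 7)]) else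
     if s = 5 then (-2, [(7, 7), (7, 7)]) else
     (0, []))"
| "table_2 M L s =
    (if s = -4 then (-1, [(-7, -7), (-7, -6), (-7, -5), (-7, -5)]) else
     if s = -3 then (-3, [(-7, -7), (-7, -6), (-7, -4), (-7, -3), (-7, -2), (-7, -2)]) else
     if s = -2 then (-3, [(-7, -5), (-7, -3), (-7, -1), (-7, 0), (-7, 1), (-7, 1), (-4, 2)]) else
     if s = -1 then (-3, [(-7, -4), (-7, -1), (-7, 1), (-7, 3), (-6, 4), (-5, 4), (-2, 5)]) else
     if s = 0 then (-2, [(-6, 1), (-6, 4), (-5, 5), (-4, 7), (-2, 7), (0, 7), (3, 7)]) else
     if s = 1 then (-2, [(-3, 3), (-3, 6), (-2, 7), (-1, 7), (0, 7), (2, 7), (4, 7)]) else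
     if s = 2 then (-1, [(0, 7), (1, 7), (2, 7), (3, 7), (5, 7), (6, 7)]) else
     if s = 3 then (-1, [(3, 7), (4, 7), (4, 7), (5, 7), (7, 7)]) else
     if s = 4 then (-1, [(6, 7), (7, 7), (7, 7)]) else
     (0, []))"
| "table_2 M S s =
    (if s = -5 then (1, [(-7, -7), (-7, -7)]) else
     if s = -4 then (-2, [(-7, -7), (-7, -6), (-7, -5), (-7, -4), (-7, -4)]) else
     if s = -3 then (-3, [(-7, -6), (-7, -5), (-7, -3), (-7, -2), (-7, -1), (-7, -1)]) else
     if s = -2 then (-3, [(-7, -4), (-7, -2), (-7, 0), (-7, 1), (-7, 2), (-6, 2), (-3, 3)]) else
     if s = -1 then (-3, [(-7, -3), (-7, 0), (-7, 2), (-6, 4), (-5, 5), (-3, 5), (-1, 6)]) else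
     if s = 0 then (-2, [(-4, 2), (-4, 5), (-3, 6), (-2, 7), (-1, 7), (1, 7), (4, 7)]) else
     if s = 1 then (-2, [(-1, 4), (-1, 7), (0, 7), (1, 7), (2, 7), (4, 7), (6, 7)]) else
     if s = 2 then (-1, [(2, 7), (3, 7), (3, 7), (4, 7), (6, 7)]) else
     if s = 3 then (-1, [(5, 7), (6, 7), (6, 7), (7, 7)]) else
     (0, []))"
| "table_2 M M s =
    (if s = -4 then (-1, [(-7, -7), (-7, -7), (-7, -6)]) else
     if s = -3 then (-2, [(-7, -6), (-7, -5), (-7, -4), (-7, -3)]) else
     if s = -2 then (-3, [(-7, -5), (-7, -4), (-7, -2), (-7, -1), (-7, 0), (-5, 0)]) else
     if s = -1 then (-3, [(-7, -3), (-7, -1), (-7, 1), (-7, 2), (-6, 3), (-3, 3)]) else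
     if s = 0 then (-3, [(-7, -2), (-6, 1), (-6, 3), (-5, 5), (-3, 6), (-1, 6), (2, 7)]) else
     if s = 1 then (-2, [(-3, 3), (-3, 6), (-2, 7), (-1, 7), (1, 7), (3, 7)]) else
     if s = 2 then (-2, [(0, 5), (0, 7), (1, 7), (2, 7), (4, 7), (5, 7)]) else
     if s = 3 then (-1, [(3, 7), (4, 7), (5, 7), (6, 7)]) else
     if s = 4 then (-1, [(6, 7), (7, 7), (7, 7)]) else
     (0, []))"

fun table_3 :: "letter \<Rightarrow> letter \<Rightarrow> int \<Rightarrow> int \<times> (int \<times> int) list" where
  "table_3 L L s =
    (if s = -3 then (-2, [(-6, -6), (-6, -5), (-6, -4), (-6, -4), (-6, -3)]) else
     if s = -2 then (-3, [(-6, -5), (-6, -3), (-6, -1), (-6, 0), (-6, 0), (-6, 1)]) else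
     if s = -1 then (-3, [(-6, -2), (-6, 1), (-6, 3), (-6, 4), (-6, 4), (-6, 5)]) else
     if s = 0 then (-3, [(-6, 0), (-6, 4), (-6, 6), (-6, 6), (-6, 6), (-4, 6), (0, 6)]) else
     if s = 1 then (-2, [(-5, 6), (-4, 6), (-4, 6), (-3, 6), (-1, 6), (2, 6)]) else
     if s = 2 then (-2, [(-1, 6), (0, 6), (0, 6), (1, 6), (3, 6), (5, 6)]) else
     if s = 3 then (-2, [(3, 6), (4, 6), (4, 6), (5, 6), (6, 6)]) else
     (0, []))"
| "table_3 L S s =
    (if s = -3 then (-2, [(-6, -5), (-6, -4), (-6, -3), (-6, -3), (-6, -2)]) else
     if s = -2 then (-3, [(-6, -4), (-6, -2), (-6, 0), (-6, 1), (-6, 1), (-6, 2)]) else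
     if s = -1 then (-3, [(-6, -1), (-6, 2), (-6, 4), (-6, 5), (-6, 5), (-5, 6)]) else
     if s = 0 then (-3, [(-6, 1), (-6, 5), (-5, 6), (-5, 6), (-4, 6), (-2, 6), (2, 6)]) else
     if s = 1 then (-2, [(-2, 6), (-1, 6), (-1, 6), (0, 6), (2, 6), (4, 6)]) else
     if s = 2 then (-2, [(2, 6), (3, 6), (3, 6), (4, 6), (5, 6)]) else
     if s = 3 then (-2, [(6, 6)]) else
     (0, []))"
| "table_3 L M s =
    (if s = -3 then (0, [(-6, -6), (-6, -6)]) else
     if s = -2 then (-3, [(-6, -6), (-6, -4), (-6, -3), (-6, -2), (-6, -2)]) else
     if s = -1 then (-3, [(-6, -3), (-6, -1), (-6, 1), (-6, 2), (-6, 2)]) else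
     if s = 0 then (-3, [(-6, 0), (-6, 3), (-6, 5), (-6, 6), (-5, 6), (-1, 6)]) else
     if s = 1 then (-3, [(-6, 2), (-5, 6), (-4, 6), (-3, 6), (-2, 6), (1, 6)]) else
     if s = 2 then (-2, [(-1, 6), (0, 6), (0, 6), (2, 6), (4, 6)]) else
     if s = 3 then (-2, [(3, 6), (4, 6), (4, 6), (5, 6)]) else
     (0, []))"
| "table_3 S L s =
    (if s = -3 then (2, [(-6, -6)]) else
     if s = -2 then (-2, [(-6, -5), (-6, -4), (-6, -3), (-6, -3), (-6, -2)]) else
     if s = -1 then (-3, [(-6, -4), (-6, -2), (-6, 0), (-6, 1), (-6, 1), (-6, 2)]) else
     if s = 0 then (-3, [(-6, -2), (-6, 2), (-6, 4), (-6, 5), (-6, 5), (-5, 6), (-1, 6)]) else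
     if s = 1 then (-2, [(-6, 5), (-5, 6), (-5, 6), (-4, 6), (-2, 6), (1, 6)]) else
     if s = 2 then (-2, [(-2, 6), (-1, 6), (-1, 6), (0, 6), (2, 6), (4, 6)]) else
     if s = 3 then (-2, [(2, 6), (3, 6), (3, 6), (4, 6), (5, 6)]) else
     (0, []))"
| "table_3 S S s =
    (if s = -3 then (0, [(-6, -6), (-6, -6), (-6, -5)]) else
     if s = -2 then (-3, [(-6, -6), (-6, -4), (-6, -3), (-6, -2), (-6, -2), (-6, -1)]) else
     if s = -1 then (-3, [(-6, -3), (-6, -1), (-6, 1), (-6, 2), (-6, 2), (-6, 3)]) else
     if s = 0 then (-3, [(-6, -1), (-6, 3), (-6, 5), (-6, 6), (-5, 6), (-3, 6), (1, 6)]) else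
     if s = 1 then (-2, [(-3, 6), (-2, 6), (-2, 6), (-1, 6), (1, 6), (3, 6)]) else
     if s = 2 then (-2, [(1, 6), (2, 6), (2, 6), (3, 6), (4, 6), (6, 6)]) else
     if s = 3 then (-2, [(5, 6), (6, 6), (6, 6)]) else
     (0, []))"
| "table_3 S M s =
    (if s = -2 then (-1, [(-6, -6), (-6, -5), (-6, -5)]) else
     if s = -1 then (-3, [(-6, -5), (-6, -3), (-6, -2), (-6, -1), (-6, -1)]) else
     if s = 0 then (-3, [(-6, -2), (-6, 0), (-6, 2), (-6, 3), (-6, 3), (-2, 4)]) else
     if s = 1 then (-3, [(-6, 0), (-6, 4), (-5, 6), (-4, 6), (-3, 6), (0, 6)]) else
     if s = 2 then (-2, [(-2, 6), (-1, 6), (-1, 6), (1, 6), (3, 6)]) else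
     if s = 3 then (-2, [(2, 6), (3, 6), (3, 6), (4, 6), (6, 6)]) else
     if s = 4 then (-2, [(6, 6)]) else
     (0, []))"
| "table_3 M L s =
    (if s = -3 then (-1, [(-6, -5), (-6, -4), (-6, -4), (-6, -3)]) else
     if s = -2 then (-2, [(-6, -4), (-6, -2), (-6, 0), (-6, 0), (-6, 1)]) else
     if s = -1 then (-2, [(-6, -1), (-6, 2), (-6, 3), (-6, 4), (-6, 5), (-2, 6)]) else
     if s = 0 then (-2, [(-6, 1), (-6, 5), (-6, 6), (-5, 6), (-3, 6), (0, 6)]) else
     if s = 1 then (-1, [(-2, 6), (-2, 6), (-1, 6), (1, 6), (3, 6)]) else
     if s = 2 then (-1, [(2, 6), (2, 6), (3, 6), (4, 6), (6, 6)]) else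
     if s = 3 then (-1, [(6, 6), (6, 6)]) else
     (0, []))"
| "table_3 M S s =
    (if s = -4 then (2, [(-6, -6)]) else
     if s = -3 then (-2, [(-6, -6), (-6, -4), (-6, -3), (-6, -3), (-6, -2)]) else
     if s = -2 then (-2, [(-6, -3), (-6, -1), (-6, 1), (-6, 1), (-6, 2)]) else
     if s = -1 then (-2, [(-6, 0), (-6, 3), (-6, 4), (-6, 5), (-4, 6), (0, 6)]) else
     if s = 0 then (-2, [(-4, 2), (-3, 6), (-3, 6), (-2, 6), (0, 6), (2, 6)]) else
     if s = 1 then (-1, [(1, 6), (1, 6), (2, 6), (3, 6), (5, 6)]) else
     if s = 2 then (-1, [(5, 6), (5, 6), (6, 6)]) else
     (0, []))"
| "table_3 M M s =
    (if s = -3 then (0, [(-6, -6), (-6, -6)]) else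
     if s = -2 then (-2, [(-6, -5), (-6, -3), (-6, -2), (-6, -2)]) else
     if s = -1 then (-2, [(-6, -2), (-6, 0), (-6, 2), (-6, 2), (-3, 3)]) else
     if s = 0 then (-2, [(-6, 1), (-6, 4), (-5, 5), (-4, 6), (-1, 6)]) else
     if s = 1 then (-2, [(-3, 3), (-2, 6), (-2, 6), (0, 6), (2, 6)]) else
     if s = 2 then (-1, [(2, 6), (2, 6), (3, 6), (5, 6)]) else
     if s = 3 then (-1, [(6, 6), (6, 6)]) else
     (0, []))"

fun table_4 :: "letter \<Rightarrow> letter \<Rightarrow> int \<Rightarrow> int \<times> (int \<times> int) list" where
  "table_4 L L s =
    (if s = -3 then (1, [(-5, -5), (-5, -4)]) else
     if s = -2 then (-2, [(-5, -3), (-5, -1), (-5, -1), (-5, 0), (-5, 1)]) else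
     if s = -1 then (-3, [(-5, -3), (-5, 2), (-5, 3), (-5, 4), (-5, 5), (-5, 5)]) else
     if s = 0 then (-2, [(-5, 5), (-5, 5), (-5, 5), (-5, 5), (-5, 5)]) else
     if s = 1 then (-2, [(-5, 5), (-5, 5), (-4, 5), (-3, 5), (-2, 5), (3, 5)]) else
     if s = 2 then (-2, [(-1, 5), (0, 5), (1, 5), (1, 5), (3, 5)]) else
     if s = 3 then (-2, [(4, 5), (5, 5)]) else
     (0, []))"
| "table_4 L S s =
    (if s = -3 then (-1, [(-5, -5), (-5, -5), (-5, -4), (-5, -3)]) else
     if s = -2 then (-2, [(-5, -2), (-5, 0), (-5, 0), (-5, 1), (-5, 2)]) else
     if s = -1 then (-3, [(-5, -2), (-5, 3), (-5, 4), (-5, 5), (-5, 5), (-5, 5)]) else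
     if s = 0 then (-2, [(-5, 5), (-5, 5), (-5, 5), (-4, 5), (-3, 5)]) else
     if s = 1 then (-2, [(-2, 5), (-1, 5), (0, 5), (0, 5), (2, 5)]) else
     if s = 2 then (-2, [(3, 5), (4, 5), (5, 5), (5, 5)]) else
     (0, []))"
| "table_4 L M s =
    (if s = -2 then (-1, [(-5, -4), (-5, -4), (-5, -3)]) else
     if s = -1 then (-3, [(-5, -5), (-5, -1), (-5, 1), (-5, 1), (-5, 2)]) else
     if s = 0 then (-3, [(-5, -1), (-5, 4), (-5, 5), (-5, 5), (-5, 5)]) else
     if s = 1 then (-2, [(-5, 5), (-5, 5), (-4, 5), (-3, 5), (2, 5)]) else
     if s = 2 then (-2, [(-1, 5), (0, 5), (1, 5), (2, 5)]) else
     if s = 3 then (-2, [(4, 5), (5, 5)]) else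
     (0, []))"
| "table_4 S L s =
    (if s = -2 then (-1, [(-5, -5), (-5, -5), (-5, -4), (-5, -3)]) else
     if s = -1 then (-2, [(-5, -2), (-5, 0), (-5, 0), (-5, 1), (-5, 2)]) else
     if s = 0 then (-2, [(-5, 3), (-5, 4), (-5, 5), (-5, 5), (-5, 5)]) else
     if s = 1 then (-2, [(-5, 5), (-5, 5), (-5, 5), (-4, 5), (-3, 5), (2, 5)]) else
     if s = 2 then (-2, [(-2, 5), (-1, 5), (0, 5), (0, 5), (2, 5)]) else
     if s = 3 then (-2, [(3, 5), (4, 5), (5, 5), (5, 5)]) else
     (0, []))"
| "table_4 S S s =
    (if s = -2 then (-1, [(-5, -4), (-5, -4), (-5, -3), (-5, -2)]) else
     if s = -1 then (-3, [(-5, -5), (-5, -1), (-5, 1), (-5, 1), (-5, 2), (-5, 3)]) else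
     if s = 0 then (-2, [(-5, 4), (-5, 5), (-5, 5), (-5, 5), (-4, 5)]) else
     if s = 1 then (-2, [(-3, 5), (-2, 5), (-1, 5), (-1, 5), (1, 5), (5, 5)]) else
     if s = 2 then (-2, [(2, 5), (3, 5), (4, 5), (4, 5)]) else
     (0, []))"
| "table_4 S M s =
    (if s = -1 then (-2, [(-5, -5), (-5, -3), (-5, -3), (-5, -2)]) else
     if s = 0 then (-3, [(-5, -4), (-5, 0), (-5, 2), (-5, 2), (-5, 3)]) else
     if s = 1 then (-2, [(-5, 5), (-5, 5), (-5, 5), (-4, 5), (1, 5)]) else
     if s = 2 then (-2, [(-2, 5), (-1, 5), (0, 5), (1, 5), (5, 5)]) else
     if s = 3 then (-2, [(3, 5), (4, 5), (5, 5)]) else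
     (0, []))"
| "table_4 M L s =
    (if s = -3 then (1, [(-5, -5), (-5, -4)]) else
     if s = -2 then (-1, [(-5, -2), (-5, -1), (-5, 0), (-5, 1)]) else
     if s = -1 then (-2, [(-5, -2), (-5, 3), (-5, 4), (-5, 5), (-5, 5)]) else
     if s = 0 then (-1, [(-5, 5), (-5, 5), (-5, 5), (-4, 5), (1, 5)]) else
     if s = 1 then (-1, [(-2, 5), (-1, 5), (-1, 5), (1, 5), (5, 5)]) else
     if s = 2 then (-1, [(3, 5), (4, 5), (4, 5)]) else
     (0, []))"
| "table_4 M S s =
    (if s = -3 then (0, [(-5, -5), (-5, -4), (-5, -3)]) else
     if s = -2 then (-2, [(-5, -5), (-5, -1), (-5, 0), (-5, 1), (-5, 2)]) else
     if s = -1 then (-2, [(-5, -1), (-5, 4), (-5, 5), (-5, 5), (-5, 5)]) else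
     if s = 0 then (-1, [(-3, 5), (-2, 5), (-2, 5), (0, 5), (4, 5)]) else
     if s = 1 then (-1, [(2, 5), (3, 5), (3, 5), (5, 5)]) else
     (0, []))"
| "table_4 M M s =
    (if s = -2 then (-1, [(-5, -5), (-5, -4), (-5, -3)]) else
     if s = -1 then (-2, [(-5, -4), (-5, 0), (-5, 1), (-5, 2)]) else
     if s = 0 then (-2, [(-5, 0), (-5, 5), (-5, 5), (-5, 5), (0, 5)]) else
     if s = 1 then (-1, [(-2, 5), (-1, 5), (0, 5), (4, 5)]) else
     if s = 2 then (-1, [(3, 5), (4, 5), (5, 5)]) else
     (0, []))"

fun table_5 :: "letter \<Rightarrow> letter \<Rightarrow> int \<Rightarrow> int \<times> (int \<times> int) list" where
  "table_5 L L s =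
    (if s = -3 then (2, [(-5, -5)]) else
     if s = -2 then (-2, [(-5, -3), (-5, -2), (-5, -1), (-5, 0), (-5, 1)]) else
     if s = -1 then (-2, [(-5, 3), (-5, 4), (-5, 5), (-5, 5), (-5, 5)]) else
     if s = 0 then (-2, [(-5, 5), (-5, 5), (-5, 5), (-5, 5), (-5, 5)]) else
     if s = 1 then (-2, [(-5, 5), (-5, 5), (-5, 5), (-4, 5), (-3, 5)]) else
     if s = 2 then (-2, [(-1, 5), (0, 5), (1, 5), (2, 5), (3, 5)]) else
     if s = 3 then (-2, [(5, 5)]) else
     (0, []))"
| "table_5 L S s =
    (if s = -3 then (1, [(-5, -5), (-5, -4)]) else
     if s = -2 then (-2, [(-5, -2), (-5, -1), (-5, 0), (-5, 1), (-5, 2)]) else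
     if s = -1 then (-2, [(-5, 4), (-5, 5), (-5, 5), (-5, 5), (-5, 5)]) else
     if s = 0 then (-2, [(-5, 5), (-5, 5), (-5, 5), (-5, 5), (-4, 5)]) else
     if s = 1 then (-2, [(-2, 5), (-1, 5), (0, 5), (1, 5), (2, 5)]) else
     if s = 2 then (-2, [(4, 5), (5, 5)]) else
     (0, []))"
| "table_5 L M s =
    (if s = -2 then (0, [(-5, -5), (-5, -4)]) else
     if s = -1 then (-2, [(-5, -1), (-5, 0), (-5, 1), (-5, 2)]) else
     if s = 0 then (-2, [(-5, 5), (-5, 5), (-5, 5), (-5, 5)]) else
     if s = 1 then (-2, [(-5, 5), (-5, 5), (-5, 5), (-4, 5)]) else
     if s = 2 then (-2, [(-1, 5), (0, 5), (1, 5), (2, 5)]) else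
     if s = 3 then (-2, [(5, 5)]) else
     (0, []))"
| "table_5 S L s =
    (if s = -2 then (1, [(-5, -5), (-5, -4)]) else
     if s = -1 then (-2, [(-5, -2), (-5, -1), (-5, 0), (-5, 1), (-5, 2)]) else
     if s = 0 then (-2, [(-5, 4), (-5, 5), (-5, 5), (-5, 5), (-5, 5)]) else
     if s = 1 then (-2, [(-5, 5), (-5, 5), (-5, 5), (-5, 5), (-4, 5)]) else
     if s = 2 then (-2, [(-2, 5), (-1, 5), (0, 5), (1, 5), (2, 5)]) else
     if s = 3 then (-2, [(4, 5), (5, 5)]) else
     (0, []))"
| "table_5 S S s =
    (if s = -2 then (0, [(-5, -5), (-5, -4), (-5, -3)]) else
     if s = -1 then (-2, [(-5, -1), (-5, 0), (-5, 1), (-5, 2), (-5, 3)]) else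
     if s = 0 then (-2, [(-5, 5), (-5, 5), (-5, 5), (-5, 5), (-5, 5)]) else
     if s = 1 then (-2, [(-3, 5), (-2, 5), (-1, 5), (0, 5), (1, 5)]) else
     if s = 2 then (-2, [(3, 5), (4, 5), (5, 5)]) else
     (0, []))"
| "table_5 S M s =
    (if s = -1 then (-1, [(-5, -5), (-5, -4), (-5, -3)]) else
     if s = 0 then (-2, [(-5, 0), (-5, 1), (-5, 2), (-5, 3)]) else
     if s = 1 then (-2, [(-5, 5), (-5, 5), (-5, 5), (-5, 5)]) else
     if s = 2 then (-2, [(-2, 5), (-1, 5), (0, 5), (1, 5)]) else
     if s = 3 then (-2, [(4, 5), (5, 5)]) else
     (0, []))"
| "table_5 M L s =
    (if s = -3 then (2, [(-5, -5)]) else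
     if s = -2 then (-1, [(-5, -2), (-5, -1), (-5, 0), (-5, 1)]) else
     if s = -1 then (-1, [(-5, 4), (-5, 5), (-5, 5), (-5, 5)]) else
     if s = 0 then (-1, [(-5, 5), (-5, 5), (-5, 5), (-5, 5)]) else
     if s = 1 then (-1, [(-2, 5), (-1, 5), (0, 5), (1, 5)]) else
     if s = 2 then (-1, [(4, 5), (5, 5)]) else
     (0, []))"
| "table_5 M S s =
    (if s = -3 then (1, [(-5, -5), (-5, -4)]) else
     if s = -2 then (-1, [(-5, -1), (-5, 0), (-5, 1), (-5, 2)]) else
     if s = -1 then (-1, [(-5, 5), (-5, 5), (-5, 5), (-5, 5)]) else
     if s = 0 then (-1, [(-3, 5), (-2, 5), (-1, 5), (0, 5)]) else
     if s = 1 then (-1, [(3, 5), (4, 5), (5, 5)]) else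
     (0, []))"
| "table_5 M M s =
    (if s = -2 then (0, [(-5, -5), (-5, -4)]) else
     if s = -1 then (-2, [(-5, -5), (-5, 0), (-5, 1), (-5, 2)]) else
     if s = 0 then (-1, [(-5, 5), (-5, 5), (-5, 5)]) else
     if s = 1 then (-1, [(-2, 5), (-1, 5), (0, 5), (5, 5)]) else
     if s = 2 then (-1, [(4, 5), (5, 5)]) else
     (0, []))"

fun table_6 :: "letter \<Rightarrow> letter \<Rightarrow> int \<Rightarrow> int \<times> (int \<times> int) list" where
  "table_6 L L s =
    (if s = -2 then (-2, [(-5, -3), (-5, -2), (-5, -1), (-5, 0), (-5, 1)]) else
     if s = -1 then (-2, [(-5, 4), (-5, 5), (-5, 5), (-5, 5), (-5, 5)]) else
     if s = 0 then (-2, [(-5, 5), (-5, 5), (-5, 5), (-5, 5), (-5, 5)]) else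
     if s = 1 then (-2, [(-5, 5), (-5, 5), (-5, 5), (-5, 5), (-4, 5)]) else
     if s = 2 then (-2, [(-1, 5), (0, 5), (1, 5), (2, 5), (3, 5)]) else
     (0, []))"
| "table_6 L S s =
    (if s = -3 then (2, [(-5, -5)]) else
     if s = -2 then (-2, [(-5, -2), (-5, -1), (-5, 0), (-5, 1), (-5, 2)]) else
     if s = -1 then (-2, [(-5, 5), (-5, 5), (-5, 5), (-5, 5), (-5, 5)]) else
     if s = 0 then (-2, [(-5, 5), (-5, 5), (-5, 5), (-5, 5), (-5, 5)]) else
     if s = 1 then (-2, [(-2, 5), (-1, 5), (0, 5), (1, 5), (2, 5)]) else
     if s = 2 then (-2, [(5, 5)]) else
     (0, []))"
| "table_6 L M s =
    (if s = -2 then (1, [(-5, -5)]) else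
     if s = -1 then (-2, [(-5, -1), (-5, 0), (-5, 1), (-5, 2)]) else
     if s = 0 then (-2, [(-5, 5), (-5, 5), (-5, 5), (-5, 5)]) else
     if s = 1 then (-2, [(-5, 5), (-5, 5), (-5, 5), (-5, 5)]) else
     if s = 2 then (-2, [(-1, 5), (0, 5), (1, 5), (2, 5)]) else
     (0, []))"
| "table_6 S L s =
    (if s = -2 then (2, [(-5, -5)]) else
     if s = -1 then (-2, [(-5, -2), (-5, -1), (-5, 0), (-5, 1), (-5, 2)]) else
     if s = 0 then (-2, [(-5, 5), (-5, 5), (-5, 5), (-5, 5), (-5, 5)]) else
     if s = 1 then (-2, [(-5, 5), (-5, 5), (-5, 5), (-5, 5), (-5, 5)]) else
     if s = 2 then (-2, [(-2, 5), (-1, 5), (0, 5), (1, 5), (2, 5)]) else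
     if s = 3 then (-2, [(5, 5)]) else
     (0, []))"
| "table_6 S S s =
    (if s = -2 then (1, [(-5, -5), (-5, -4)]) else
     if s = -1 then (-2, [(-5, -1), (-5, 0), (-5, 1), (-5, 2), (-5, 3)]) else
     if s = 0 then (-2, [(-5, 5), (-5, 5), (-5, 5), (-5, 5), (-5, 5)]) else
     if s = 1 then (-2, [(-3, 5), (-2, 5), (-1, 5), (0, 5), (1, 5)]) else
     if s = 2 then (-2, [(4, 5), (5, 5)]) else
     (0, []))"
| "table_6 S M s =
    (if s = -1 then (0, [(-5, -5), (-5, -4)]) else
     if s = 0 then (-2, [(-5, 0), (-5, 1), (-5, 2), (-5, 3)]) else
     if s = 1 then (-2, [(-5, 5), (-5, 5), (-5, 5), (-5, 5)]) else
     if s = 2 then (-2, [(-2, 5), (-1, 5), (0, 5), (1, 5)]) else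
     if s = 3 then (-2, [(5, 5)]) else
     (0, []))"
| "table_6 M L s =
    (if s = -2 then (-1, [(-5, -2), (-5, -1), (-5, 0), (-5, 1)]) else
     if s = -1 then (-1, [(-5, 5), (-5, 5), (-5, 5), (-5, 5)]) else
     if s = 0 then (-1, [(-5, 5), (-5, 5), (-5, 5), (-5, 5)]) else
     if s = 1 then (-1, [(-2, 5), (-1, 5), (0, 5), (1, 5)]) else
     if s = 2 then (-1, [(5, 5)]) else
     (0, []))"
| "table_6 M S s =
    (if s = -3 then (2, [(-5, -5)]) else
     if s = -2 then (-1, [(-5, -1), (-5, 0), (-5, 1), (-5, 2)]) else
     if s = -1 then (-1, [(-5, 5), (-5, 5), (-5, 5), (-5, 5)]) else
     if s = 0 then (-1, [(-3, 5), (-2, 5), (-1, 5), (0, 5)]) else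
     if s = 1 then (-1, [(4, 5), (5, 5)]) else
     (0, []))"
| "table_6 M M s =
    (if s = -2 then (1, [(-5, -5)]) else
     if s = -1 then (-1, [(-5, 0), (-5, 1), (-5, 2)]) else
     if s = 0 then (-1, [(-5, 5), (-5, 5), (-5, 5)]) else
     if s = 1 then (-1, [(-2, 5), (-1, 5), (0, 5)]) else
     if s = 2 then (-1, [(5, 5)]) else
     (0, []))"

lemma table_certificate_2: "table_certificate 2 7 (row_table table_2)"
  by code_simp

lemma table_certificate_3: "table_certificate 3 6 (row_table table_3)"
  by code_simp

lemma table_certificate_4: "table_certificate 4 5 (row_table table_4)"
  by code_simp

lemma table_certificate_5: "table_certificate 5 5 (row_table table_5)"
  by code_simp

lemma table_certificate_6: "table_certificate 6 5 (row_table table_6)"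
  by code_simp

lemma balance_certificate_exists:
  assumes "1 < p"
  shows "\<exists>E Inv. balance_certificate p E Inv"
proof -
  consider "p = 2" | "p = 3" | "p = 4" | "p = 5" | "p = 6" | "7 \<le> p" using assms by linarith
  then show ?thesis
  proof cases
    case 1 then show ?thesis using table_certificate_sound[OF _ table_certificate_2] by auto
  next
    case 2 then show ?thesis using table_certificate_sound[OF _ table_certificate_3] by auto
  next
    case 3 then show ?thesis using table_certificate_sound[OF _ table_certificate_4] by auto
  next
    case 4 then show ?thesis using table_certificate_sound[OF _ table_certificate_5] by auto
  next
    case 5 then show ?thesis using table_certificate_sound[OF _ table_certificate_6] by auto
  next
    case 6 then show ?thesis using large_p_certificate by auto
  qed
qed

theorem corollary2p2:
  fixes p :: nat
  assumes "p > 1"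
  shows "balanced 3 (u p) \<and> \<not> balanced 2 (u p)"
proof
  show "balanced 3 (u p)"
    using balance_certificate_exists[OF assms] balance_certificate.balanced_3 by blast
  show "\<not> balanced 2 (u p)"
    using assms not_balanced_2_p_2 not_balanced_2_ge_3[of p] by (cases "p = 2") auto
qed

end
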